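(* Let $G_0$ be the group of homeomorphisms of $\mathbb{R}$ defined in the context. The center of $G_0$ is trivial.
   Context: $G_0$ is the group of homeomorphisms of $\mathbb{R}$ generated by the following maps: - $a(t)=t+1$; - $b$, where $b(t)=t$ for $t\le 0$, $b(t)=t/(1-t)$ for $0\le t\le 1/2$, $b(t)=(3t-1)/t$ for $1/2\le t\le 1$, and $b(t)=t+1$ for $t\ge 1$; - $c$, where $c(t)=2t/(t+1)$ for $0\le t\le 1$ and $c(t)=t$ otherwise. *)

theory Defs
  imports Complex_Main
begin

definition ga :: "real \<Rightarrow> real" where
  "ga t = t + 1"

definition gb :: "real \<Rightarrow> real" where
  "gb t = (if t \<le> 0 then t
           else if t \<le> 1/2 then t / (1 - t)
           else if t \<le> 1 then (3 * t - 1) / t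
           else t + 1)"

definition gc :: "real \<Rightarrow> real" where
  "gc t = (if 0 \<le> t \<and> t \<le> 1 then 2 * t / (t + 1) else t)"

inductive_set G0 :: "(real \<Rightarrow> real) set" where
  G0_id: "id \<in> G0"
| G0_gen: "g \<in> G0 \<Longrightarrow> s \<in> {ga, gb, gc} \<Longrightarrow> s \<circ> g \<in> G0"
| G0_geninv: "g \<in> G0 \<Longrightarrow> s \<in> {ga, gb, gc} \<Longrightarrow> inv s \<circ> g \<in> G0"

definition center_G0 :: "(real \<Rightarrow> real) set" where
  "center_G0 = {g \<in> G0. \<forall>h \<in> G0. g \<circ> h = h \<circ> g}"

end

theory Submission
  imports Defs
begin

text \<open>Let \<open>g\<close> be central. Since \<open>g\<close> commutes with \<open>gb\<close>, the point \<open>g 0\<close> is a fixed point of \<open>gb\<close>,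
  so \<open>g 0 \<le> 0\<close>; since it commutes with \<open>ga\<close> as well, \<open>g 1 = g 0 + 1\<close> is a point where \<open>gb\<close> acts
  as \<open>ga\<close>, so \<open>g 1 \<ge> 1\<close>. Hence \<open>g\<close> fixes \<open>0\<close>, and by centrality the whole orbit of \<open>0\<close>.
  That orbit contains every rational number: the inverse branches \<open>x \<mapsto> x/(1+x)\<close> and
  \<open>x \<mapsto> 1/(2-x)\<close> of \<open>gb\<close> generate all of \<open>[0,1] \<inter> \<rat>\<close> from \<open>0\<close> and \<open>1\<close> by a Euclidean descent on
  denominators, and \<open>ga\<close> translates by integers. An increasing map fixing a dense set is the
  identity.\<close>

lemma strict_mono_fixing_dense_set_eq_id:
  fixes f :: "'a::linorder \<Rightarrow> 'a"
  assumes "strict_mono f"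
    and dense: "\<And>x y. x < y \<Longrightarrow> \<exists>d\<in>D. x < d \<and> d < y"
    and fixed: "\<And>d. d \<in> D \<Longrightarrow> f d = d"
  shows "f = id"
proof
  fix x
  show "f x = id x"
  proof (rule ccontr)
    assume "f x \<noteq> id x"
    then consider "x < f x" | "f x < x" by fastforce
    then show False
    proof cases
      case 1
      then obtain d where "d \<in> D" "x < d" "d < f x" using dense by blast
      then show False using fixed strict_monoD[OF \<open>strict_mono f\<close>, of x d] by simp
    next
      case 2
      then obtain d where "d \<in> D" "f x < d" "d < x" using dense by blast
      then show False using fixed strict_monoD[OF \<open>strict_mono f\<close>, of d x] by simp
    qed
  qed
qed

lemma gb_inverse_left_branch: "0 \<le> x \<Longrightarrow> x \<le> 1 \<Longrightarrow> gb (x / (1 + x)) = x"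
  by (simp add: gb_def field_simps)

lemma gb_inverse_right_branch: "0 \<le> x \<Longrightarrow> x \<le> 1 \<Longrightarrow> gb (1 / (2 - x)) = x + 1"
  by (cases "x = 0") (simp_all add: gb_def field_simps)

lemma strict_mono_ga: "strict_mono ga"
  by (rule strict_monoI) (simp add: ga_def)

lemma strict_mono_gb: "strict_mono gb"
proof (rule strict_monoI)
  fix x y :: real
  assume "x < y"
  have "gb t \<le> 0" if "t \<le> 0" for t
    using that by (simp add: gb_def)
  moreover have "0 < gb t \<and> gb t \<le> 1" if "0 < t" "t \<le> 1/2" for t
    using that by (simp add: gb_def field_simps)
  moreover have "1 < gb t \<and> gb t \<le> 2" if "1/2 < t" "t \<le> 1" for t
    using that by (simp add: gb_def field_simps)
  moreover have "2 < gb t" if "1 < t" for t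
    using that by (simp add: gb_def)
  moreover have "x / (1 - x) < y / (1 - y)" if "0 < x" "y \<le> 1/2"
    using that \<open>x < y\<close> by (simp add: field_simps)
  moreover have "(3 * x - 1) / x < (3 * y - 1) / y" if "1/2 < x" "y \<le> 1"
    using that \<open>x < y\<close> by (simp add: field_simps)
  ultimately show "gb x < gb y"
    using \<open>x < y\<close> by (smt (verit) gb_def)
qed

lemma strict_mono_gc: "strict_mono gc"
proof (rule strict_monoI)
  fix x y :: real
  assume "x < y"
  have "0 \<le> 2 * t / (t + 1) \<and> 2 * t / (t + 1) \<le> 1" if "0 \<le> t" "t \<le> 1" for t :: real
    using that by (simp add: field_simps)
  moreover have "2 * x / (x + 1) < 2 * y / (y + 1)" if "0 \<le> x" "y \<le> 1"
    using that \<open>x < y\<close> by (simp add: field_simps)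
  ultimately show "gc x < gc y"
    using \<open>x < y\<close> by (smt (verit) gc_def)
qed

lemma surj_ga: "surj ga"
  by (rule surjI[of _ "\<lambda>y. y - 1"]) (simp add: ga_def)

lemma surj_gb: "surj gb"
proof (rule surjI)
  fix y :: real
  define x where "x = (if y \<le> 0 then y else if y \<le> 1 then y / (1 + y)
                        else if y \<le> 2 then 1 / (2 - (y - 1)) else y - 1)"
  show "gb x = y"
    using gb_inverse_left_branch[of y] gb_inverse_right_branch[of "y - 1"]
    by (auto simp: x_def gb_def)
qed

lemma surj_gc: "surj gc"
proof (rule surjI)
  fix y :: real
  show "gc (if 0 \<le> y \<and> y \<le> 1 then y / (2 - y) else y) = y"
    by (auto simp: gc_def field_simps)
qed

lemma generator_strict_mono: "s \<in> {ga, gb, gc} \<Longrightarrow> strict_mono s"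
  using strict_mono_ga strict_mono_gb strict_mono_gc by auto

lemma generator_surj: "s \<in> {ga, gb, gc} \<Longrightarrow> surj s"
  using surj_ga surj_gb surj_gc by auto

lemma generator_inj: "s \<in> {ga, gb, gc} \<Longrightarrow> inj s"
  using generator_strict_mono strict_mono_imp_inj_on by blast

lemma generator_in_G0: "s \<in> {ga, gb, gc} \<Longrightarrow> s \<in> G0"
  using G0_gen[OF G0_id] by fastforce

lemma G0_strict_mono: "h \<in> G0 \<Longrightarrow> strict_mono h"
proof (induction rule: G0.induct)
  case G0_id
  show ?case by (simp add: strict_mono_def)
next
  case (G0_gen g s)
  then show ?case
    using generator_strict_mono by (simp add: strict_mono_def)
next
  case (G0_geninv g s)
  have "strict_mono (inv s)"
  proof (rule strict_mono_inv)
    show "strict_mono s" "surj s"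
      using G0_geninv(2) by (simp_all add: generator_strict_mono generator_surj)
    show "inv s (s x) = x" for x
      using G0_geninv(2) by (simp add: generator_inj)
  qed
  with G0_geninv show ?case by (simp add: strict_mono_def)
qed

lemma gb_fixed_point_nonpos: "gb u = u \<Longrightarrow> u \<le> 0"
proof (rule ccontr)
  assume fixed: "gb u = u" and "\<not> u \<le> 0"
  consider "0 < u" "u \<le> 1/2" | "1/2 < u" "u \<le> 1" | "1 < u" using \<open>\<not> u \<le> 0\<close> by linarith
  then show False
  proof cases
    case 1
    then have "u = u * (1 - u)" using fixed by (simp add: gb_def field_simps)
    then show False using 1 by (simp add: algebra_simps)
  next
    case 2
    then have "3 * u - 1 = u * u" using fixed by (simp add: gb_def field_simps)
    moreover have "u * u \<le> u" using 2 by (simp add: mult_le_cancel_left1)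
    ultimately show False using 2 by linarith
  next
    case 3
    then show False using fixed by (simp add: gb_def)
  qed
qed

lemma gb_eq_ga_imp_ge_one: "gb v = ga v \<Longrightarrow> 1 \<le> v"
proof (rule ccontr)
  assume eq: "gb v = ga v" and "\<not> 1 \<le> v"
  consider "v \<le> 0" | "0 < v" "v \<le> 1/2" | "1/2 < v" "v < 1" using \<open>\<not> 1 \<le> v\<close> by linarith
  then show False
  proof cases
    case 1
    then show False using eq by (simp add: gb_def ga_def)
  next
    case 2
    then have "gb v \<le> 1" by (simp add: gb_def field_simps)
    then show False using 2 eq by (simp add: ga_def)
  next
    case 3
    then have "(v - 1) * (v - 1) = 0" using eq by (simp add: gb_def ga_def field_simps)
    then show False using 3 by simp
  qed
qed

definition G0_orbit :: "real \<Rightarrow> real set" where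
  "G0_orbit x = (\<lambda>h. h x) ` G0"

lemma G0_orbit_self: "x \<in> G0_orbit x"
  unfolding G0_orbit_def by (rule image_eqI[OF _ G0_id]) simp

lemma G0_orbit_generator:
  assumes "s \<in> {ga, gb, gc}" "y \<in> G0_orbit x"
  shows "s y \<in> G0_orbit x"
proof -
  obtain h where "h \<in> G0" "y = h x" using assms(2) unfolding G0_orbit_def by blast
  then have "s y = (s \<circ> h) x" by simp
  then show ?thesis
    unfolding G0_orbit_def by (rule image_eqI[OF _ G0_gen[OF \<open>h \<in> G0\<close> assms(1)]])
qed

lemma G0_orbit_generator_preimage:
  assumes "s \<in> {ga, gb, gc}" "s y \<in> G0_orbit x"
  shows "y \<in> G0_orbit x"
proof -
  obtain h where "h \<in> G0" "s y = h x" using assms(2) unfolding G0_orbit_def by blast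
  then have "y = (inv s \<circ> h) x"
    using inv_f_f[OF generator_inj[OF assms(1)], of y] by simp
  then show ?thesis
    unfolding G0_orbit_def by (rule image_eqI[OF _ G0_geninv[OF \<open>h \<in> G0\<close> assms(1)]])
qed

lemma G0_orbit_add_of_int:
  assumes "y \<in> G0_orbit x"
  shows "y + of_int m \<in> G0_orbit x"
proof (induction m rule: int_induct[where k = 0])
  case base
  show ?case using assms by simp
next
  case (step1 i)
  then have "ga (y + of_int i) \<in> G0_orbit x" by (simp add: G0_orbit_generator)
  then show ?case by (simp add: ga_def add.assoc)
next
  case (step2 i)
  then have "ga (y + of_int (i - 1)) \<in> G0_orbit x" by (simp add: ga_def)
  then show ?case by (rule G0_orbit_generator_preimage[rotated]) simp
qed

lemma G0_orbit_zero_unit_interval_fractions: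
  "p \<le> q \<Longrightarrow> 0 < q \<Longrightarrow> real p / real q \<in> G0_orbit 0"
proof (induction q arbitrary: p rule: less_induct)
  case (less q)
  have zero: "0 \<in> G0_orbit 0" by (rule G0_orbit_self)
  consider "p = 0" | "p = q" | "0 < p" "2 * p \<le> q" | "p < q" "q < 2 * p"
    using less.prems by linarith
  then show ?case
  proof cases
    case 1
    then show ?thesis using zero by simp
  next
    case 2
    then show ?thesis
      using G0_orbit_add_of_int[OF zero, of 1] less.prems by simp
  next
    case 3
    define r where "r = real p / real (q - p)"
    have "r \<in> G0_orbit 0" unfolding r_def using 3 less.IH[of "q - p" p] by simp
    moreover have "gb (real p / real q) = r"
    proof -
      have "real p / real q = r / (1 + r)"
        using 3 by (simp add: r_def field_simps)
      moreover have "0 \<le> r" "r \<le> 1" using 3 by (simp_all add: r_def field_simps)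
      ultimately show ?thesis using gb_inverse_left_branch by simp
    qed
    ultimately show ?thesis
      using G0_orbit_generator_preimage[of gb "real p / real q"] by simp
  next
    case 4
    define r where "r = real (2 * p - q) / real p"
    have "r \<in> G0_orbit 0" unfolding r_def using 4 less.IH[of p "2 * p - q"] by simp
    then have "ga r \<in> G0_orbit 0" by (simp add: G0_orbit_generator)
    moreover have "gb (real p / real q) = ga r"
    proof -
      have "real p / real q = 1 / (2 - r)"
        using 4 by (simp add: r_def field_simps)
      moreover have "0 \<le> r" "r \<le> 1" using 4 by (simp_all add: r_def field_simps)
      ultimately show ?thesis using gb_inverse_right_branch by (simp add: ga_def)
    qed
    ultimately show ?thesis
      using G0_orbit_generator_preimage[of gb "real p / real q"] by simp
  qed
qed

lemma Rats_subset_G0_orbit_zero: "\<rat> \<subseteq> G0_orbit 0"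
proof
  fix r :: real
  assume "r \<in> \<rat>"
  then obtain a b where "0 < b" and r: "r = of_int a / of_int b" by (rule Rats_cases')
  have "real (nat (a mod b)) / real (nat b) \<in> G0_orbit 0"
  proof (rule G0_orbit_zero_unit_interval_fractions)
    show "nat (a mod b) \<le> nat b"
      using pos_mod_bound[OF \<open>0 < b\<close>, of a] by simp
  qed (use \<open>0 < b\<close> in simp)
  then have "real (nat (a mod b)) / real (nat b) + of_int (a div b) \<in> G0_orbit 0"
    by (rule G0_orbit_add_of_int)
  moreover have "real (nat (a mod b)) / real (nat b) + of_int (a div b) = r"
  proof -
    have "of_int a = (of_int (a div b) * of_int b + of_int (a mod b) :: real)"
      by (metis div_mult_mod_eq of_int_add of_int_mult)
    then show ?thesis using \<open>0 < b\<close> by (simp add: r field_simps)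
  qed
  ultimately show "r \<in> G0_orbit 0" by simp
qed

lemma center_G0_commute:
  assumes "g \<in> center_G0" "h \<in> G0"
  shows "g (h t) = h (g t)"
proof -
  have "g \<circ> h = h \<circ> g" using assms unfolding center_G0_def by blast
  then show ?thesis by (simp add: fun_eq_iff)
qed

lemma center_G0_fixes_zero:
  assumes "g \<in> center_G0"
  shows "g 0 = 0"
proof -
  have commute: "g (s t) = s (g t)" if "s \<in> {ga, gb, gc}" for s t
    using center_G0_commute[OF assms generator_in_G0[OF that]] .
  have "gb (g 0) = g 0"
    using commute[of gb 0] by (simp add: gb_def)
  then have "g 0 \<le> 0" by (rule gb_fixed_point_nonpos)
  have shift: "g 1 = ga (g 0)"
    using commute[of ga 0] by (simp add: ga_def)
  have "gb (g 1) = ga (g 1)"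
    using commute[of gb 1] commute[of ga 1] shift by (simp add: gb_def ga_def)
  then have "1 \<le> g 1" by (rule gb_eq_ga_imp_ge_one)
  then show ?thesis using \<open>g 0 \<le> 0\<close> shift by (simp add: ga_def)
qed

lemma center_G0_fixes_G0_orbit_zero:
  assumes "g \<in> center_G0" "y \<in> G0_orbit 0"
  shows "g y = y"
proof -
  obtain h where "h \<in> G0" "y = h 0" using assms(2) unfolding G0_orbit_def by blast
  then show ?thesis
    using center_G0_commute[OF assms(1) \<open>h \<in> G0\<close>] center_G0_fixes_zero[OF assms(1)] by simp
qed

theorem mainTheorem7:
  shows "center_G0 = {id}"
proof
  show "{id} \<subseteq> center_G0"
    unfolding center_G0_def using G0_id by auto
next
  show "center_G0 \<subseteq> {id}"
  proof
    fix g
    assume central: "g \<in> center_G0"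
    have "strict_mono g"
      using central G0_strict_mono unfolding center_G0_def by blast
    then have "g = id"
    proof (rule strict_mono_fixing_dense_set_eq_id)
      show "\<exists>d\<in>G0_orbit 0. x < d \<and> d < y" if "x < y" for x y :: real
        using Rats_dense_in_real[OF that] Rats_subset_G0_orbit_zero by blast
    qed (rule center_G0_fixes_G0_orbit_zero[OF central])
    then show "g \<in> {id}" by simp
  qed
qed

end
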